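(* Fix $n\ge1$ and order the compositions of $n$ first by increasing length and then, among compositions of equal length, lexicographically. For each composition $J$ of $n$ let $$U_J=\sum_{\sigma\in\mathfrak S_n,\ \mathrm{SC}(\sigma)=\overline{J}^{\sim}}F_{\mathrm{RC}(\sigma)}\in QSym.$$ Then the transition matrix $M_n$, whose column indexed by $J$ gives the coefficients of $U_J$ in the fundamental basis $(F_I)$, is upper unitriangular: $U_J=F_J+\sum_{I<J}m_{I,J}F_I$ for some integers $m_{I,J}$.
   Context: Permutations are words $\sigma_1\cdots\sigma_n$. A word $a_1\cdots a_m$ is initially dominated if $a_1>a_j$ for all $j\ge2$; every permutation factors uniquely as $\sigma=u_1\cdots u_r$ into initially dominated words with increasing first letters, and $\mathrm{SC}(\sigma)=(|u_1|,\ldots,|u_r|)$ is its saillance composition. For a composition $I=(i_1,\ldots,i_r)$ of $n$, $\mathrm{Des}(I)=\{i_1,i_1+i_2,\ldots,i_1+\cdots+i_{r-1}\}$, and $\overline{I}^{\sim}$ denotes the composition of $n$ whose descent set is $\{1,\ldots,n-1\}\setminus\mathrm{Des}(I)$. The recoil composition $\mathrm{RC}(\sigma)$ is the composition of $n$ whose descent set is the set of recoils $\{i: i+1 \text{ appears to the left of } i \text{ in } \sigma\}$. $F_I$ denotes Gessel's fundamental quasi-symmetric function. *)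

theory Defs
  imports Main
begin

definition is_comp :: "nat \<Rightarrow> nat list \<Rightarrow> bool" where
  "is_comp n I \<longleftrightarrow> (\<forall>x\<in>set I. 0 < x) \<and> sum_list I = n"

definition comp_des :: "nat list \<Rightarrow> nat set" where
  "comp_des I = {sum_list (take k I) | k. 0 < k \<and> k < length I}"

definition comp_of_des :: "nat \<Rightarrow> nat set \<Rightarrow> nat list" where
  "comp_of_des n S = (THE K. is_comp n K \<and> comp_des K = S)"

definition comp_bar_tilde :: "nat \<Rightarrow> nat list \<Rightarrow> nat list" where
  "comp_bar_tilde n J = comp_of_des n ({1..<n} - comp_des J)"

definition perms :: "nat \<Rightarrow> nat list set" where
  "perms n = {s. distinct s \<and> set s = {1..n}}"

definition init_dominated :: "nat list \<Rightarrow> bool" where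
  "init_dominated u \<longleftrightarrow> u \<noteq> [] \<and> (\<forall>a\<in>set (tl u). a < hd u)"

definition saillance_factorization :: "nat list \<Rightarrow> nat list list" where
  "saillance_factorization s = (THE us. concat us = s \<and> (\<forall>u\<in>set us. init_dominated u)
      \<and> sorted_wrt (<) (map hd us))"

definition SC :: "nat list \<Rightarrow> nat list" where
  "SC s = map length (saillance_factorization s)"

definition recoils :: "nat list \<Rightarrow> nat set" where
  "recoils s = {i. \<exists>j k. j < k \<and> k < length s \<and> s ! j = i + 1 \<and> s ! k = i}"

definition RC :: "nat \<Rightarrow> nat list \<Rightarrow> nat list" where
  "RC n s = comp_of_des n (recoils s)"

text \<open>Element of QSym represented by its coefficient vector in the fundamental
  basis (F_I): U_J = sum over sigma with SC sigma = J-bar-tilde of F_(RC sigma),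
  so the coefficient of F_I is the number of such sigma with RC sigma = I.\<close>
definition U_coeff :: "nat \<Rightarrow> nat list \<Rightarrow> nat list \<Rightarrow> int" where
  "U_coeff n J I = int (card {s \<in> perms n. SC s = comp_bar_tilde n J \<and> RC n s = I})"

definition comp_less :: "nat list \<Rightarrow> nat list \<Rightarrow> bool" where
  "comp_less I J \<longleftrightarrow> length I < length J \<or>
     (length I = length J \<and> (I, J) \<in> lexord {(a, b). a < b})"

end

theory Submission
  imports Defs
begin

(*
  The saillance factorization of a permutation s cuts it in front of every left-to-right
  maximum, so the descent set of SC s is the set P of (0-based, nonzero) positions of
  left-to-right maxima.  A left-to-right maximal value v < n is never a recoil, since v + 1
  cannot stand to its left; hence the recoil set lies in the complement of the set V of these
  values, and |V| = |P|.  If SC s is the composition whose descent set is the complement of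
  Des J, i.e. Des J = {1..<n} - P, then RC s has at most as many parts as J, and if it has as
  many, Des (RC s) = {1..<n} - V.

  Sending v in V to the first position whose entry exceeds v is a strictly increasing map
  V -> P with image at most v.  Counting below the least element x of the symmetric
  difference of V and P shows x lies in P, so RC s precedes J lexicographically unless V = P.
  When V = P that map is the identity, which pins s down as the concatenation of decreasing
  runs of consecutive values whose lengths are the parts of SC s; this permutation indeed
  has recoil composition J.
*)

section \<open>Compositions and descent sets\<close>

lemma comp_des_eq_image: "comp_des I = (\<lambda>k. sum_list (take k I)) ` {0<..<length I}"
  by (auto simp: comp_des_def)

lemma finite_comp_des [simp]: "finite (comp_des I)"
  by (simp add: comp_des_eq_image)

lemma comp_des_Nil [simp]: "comp_des [] = {}"
  by (simp add: comp_des_def)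

lemma comp_des_Cons:
  "comp_des (a # A) = (if A = [] then {} else insert a ((+) a ` comp_des A))"
proof -
  have "{0<..<length (a # A)} = Suc ` {..<length A}"
    by (auto simp: image_iff gr0_conv_Suc)
  moreover have "{..<length A} = (if A = [] then {} else insert 0 {0<..<length A})"
    by auto
  ultimately show ?thesis
    by (simp add: comp_des_eq_image image_image)
qed

lemma comp_des_Cons_ge: "y \<in> comp_des (a # A) \<Longrightarrow> a \<le> y"
  by (auto simp: comp_des_Cons split: if_splits)

lemma comp_des_pos: "\<forall>x\<in>set I. 0 < x \<Longrightarrow> y \<in> comp_des I \<Longrightarrow> 0 < y"
  by (cases I) (auto simp: comp_des_Cons split: if_splits)

lemma add_mem_comp_des_Cons_iff:
  assumes "A \<noteq> []" "\<forall>x\<in>set A. 0 < x"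
  shows "a + y \<in> comp_des (a # A) \<longleftrightarrow> y = 0 \<or> y \<in> comp_des A"
  using assms comp_des_pos[OF assms(2)] by (auto simp: comp_des_Cons)

lemma comp_des_subset: "is_comp n I \<Longrightarrow> comp_des I \<subseteq> {1..<n}"
proof (induction I arbitrary: n)
  case (Cons a A)
  then have A: "is_comp (n - a) A" "0 < a" "a + sum_list A = n"
    by (auto simp: is_comp_def)
  show ?case
  proof (cases "A = []")
    case False
    then have "0 < sum_list A"
      using A(1) by (cases A) (auto simp: is_comp_def)
    then show ?thesis
      using Cons.IH[OF A(1)] A False by (auto simp: comp_des_Cons)
  qed (simp add: comp_des_Cons)
qed simp

lemma not_mem_shifted_comp_des: "\<forall>x\<in>set A. 0 < x \<Longrightarrow> a \<notin> (+) a ` comp_des A"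
  using comp_des_pos[of A] by fastforce

lemma card_comp_des: "\<forall>x\<in>set I. 0 < x \<Longrightarrow> card (comp_des I) = length I - 1"
proof (induction I)
  case (Cons a A)
  then show ?case
    using not_mem_shifted_comp_des[of A a] by (auto simp: comp_des_Cons card_image)
qed simp

lemma comp_des_tl:
  assumes "\<forall>x\<in>set A. 0 < x"
  shows "comp_des A = (\<lambda>x. x - a) ` (comp_des (a # A) - {a})"
proof (cases "A = []")
  case False
  then have "comp_des (a # A) - {a} = (+) a ` comp_des A"
    using not_mem_shifted_comp_des[OF assms] by (simp add: comp_des_Cons)
  then show ?thesis by (simp add: image_image)
qed (simp add: comp_des_Cons)

lemma Min_comp_des_Cons: "A \<noteq> [] \<Longrightarrow> Min (comp_des (a # A)) = a"
  by (rule Min_eqI) (auto simp: comp_des_Cons)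

lemma comp_des_inject:
  "is_comp n K \<Longrightarrow> is_comp n K' \<Longrightarrow> comp_des K = comp_des K' \<Longrightarrow> K = K'"
proof (induction K arbitrary: n K')
  case Nil
  then show ?case by (cases K') (auto simp: is_comp_def)
next
  case (Cons a A)
  obtain b B where K': "K' = b # B"
    using Cons.prems by (cases K') (auto simp: is_comp_def)
  show ?case
  proof (cases "A = []")
    case True
    then show ?thesis using Cons.prems K' by (auto simp: is_comp_def comp_des_Cons split: if_splits)
  next
    case False
    then have "B \<noteq> []" using Cons.prems K' by (auto simp: comp_des_Cons split: if_splits)
    then have "a = b"
      using Min_comp_des_Cons[OF False, of a] Min_comp_des_Cons[of B b] Cons.prems K' by simp
    moreover have "comp_des A = comp_des B"
      using comp_des_tl[of A a] comp_des_tl[of B a] Cons.prems K' \<open>a = b\<close>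
      by (simp add: is_comp_def)
    moreover have "is_comp (n - a) A" "is_comp (n - a) B"
      using Cons.prems K' \<open>a = b\<close> by (auto simp: is_comp_def)
    ultimately show ?thesis using Cons.IH K' by blast
  qed
qed

lemma ex_comp_with_des:
  "1 \<le> n \<Longrightarrow> S \<subseteq> {1..<n} \<Longrightarrow> \<exists>K. is_comp n K \<and> comp_des K = S"
proof (induction n arbitrary: S rule: less_induct)
  case (less n)
  show ?case
  proof (cases "S = {}")
    case True
    then show ?thesis
      using less.prems by (intro exI[of _ "[n]"]) (auto simp: is_comp_def comp_des_Cons)
  next
    case False
    have "finite S" using less.prems finite_subset by blast
    define a where "a = Min S"
    have "a \<in> S" "\<forall>x\<in>S. a \<le> x"
      using \<open>finite S\<close> False by (auto simp: a_def)
    then have a: "a \<in> S" "\<forall>x\<in>S. a \<le> x" "1 \<le> a" "a < n"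
      using less.prems by auto
    define S' where "S' = (\<lambda>x. x - a) ` (S - {a})"
    have "S' \<subseteq> {1..<n - a}"
      using a less.prems by (force simp: S'_def)
    moreover have "n - a < n" "1 \<le> n - a" using a by auto
    ultimately obtain K' where K': "is_comp (n - a) K'" "comp_des K' = S'"
      using less.IH by blast
    have "K' \<noteq> []" using K' a by (auto simp: is_comp_def)
    have "insert a ((+) a ` S') = S"
      using a by (force simp: S'_def image_image)
    then have "comp_des (a # K') = S" using K' \<open>K' \<noteq> []\<close> by (simp add: comp_des_Cons)
    moreover have "is_comp n (a # K')" using K' a by (auto simp: is_comp_def)
    ultimately show ?thesis by blast
  qed
qed

lemma
  assumes "1 \<le> n" "S \<subseteq> {1..<n}"
  shows is_comp_comp_of_des: "is_comp n (comp_of_des n S)"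
    and comp_des_comp_of_des: "comp_des (comp_of_des n S) = S"
proof -
  have "\<exists>!K. is_comp n K \<and> comp_des K = S"
    using ex_comp_with_des[OF assms] comp_des_inject by blast
  then have "is_comp n (comp_of_des n S) \<and> comp_des (comp_of_des n S) = S"
    unfolding comp_of_des_def by (rule theI')
  then show "is_comp n (comp_of_des n S)" "comp_des (comp_of_des n S) = S"
    by simp_all
qed

lemma comp_of_des_comp_des:
  assumes "1 \<le> n" "is_comp n K"
  shows "comp_of_des n (comp_des K) = K"
proof -
  have des: "comp_des K \<subseteq> {1..<n}" using comp_des_subset[OF assms(2)] .
  show ?thesis
    by (rule comp_des_inject[OF is_comp_comp_of_des[OF assms(1) des] assms(2)
          comp_des_comp_of_des[OF assms(1) des]])
qed

lemma least_des_difference_Cons: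
  assumes "A \<noteq> []" "B \<noteq> []" "\<forall>x\<in>set A. 0 < x" "\<forall>x\<in>set B. 0 < x"
    and "x \<in> comp_des (a # A)" "x \<notin> comp_des (a # B)"
    and agree: "\<forall>y<x. y \<in> comp_des (a # A) \<longleftrightarrow> y \<in> comp_des (a # B)"
  obtains x' where "x' \<in> comp_des A" "x' \<notin> comp_des B"
    "\<forall>y<x'. y \<in> comp_des A \<longleftrightarrow> y \<in> comp_des B"
proof -
  have "a \<le> x" using assms(5) comp_des_Cons_ge by blast
  moreover have "x \<noteq> a" using assms(2,6) by (auto simp: comp_des_Cons)
  ultimately obtain x' where x': "x = a + x'" "x' \<noteq> 0" by (metis add_0_right le_Suc_ex)
  note shift = add_mem_comp_des_Cons_iff[OF assms(1,3)] add_mem_comp_des_Cons_iff[OF assms(2,4)]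
  have "0 \<notin> comp_des A" "0 \<notin> comp_des B"
    using comp_des_pos[OF assms(3)] comp_des_pos[OF assms(4)] by blast+
  then have "y \<in> comp_des A \<longleftrightarrow> y \<in> comp_des B" if "y < x'" for y
    using agree[rule_format, of "a + y"] that x' shift by auto
  then show thesis
    using that[of x'] assms(5,6) x' shift by simp
qed

lemma lexord_if_least_des_difference:
  assumes "length I = length J" "\<forall>x\<in>set I. 0 < x" "\<forall>x\<in>set J. 0 < x"
    and "x \<in> comp_des I" "x \<notin> comp_des J" "\<forall>y<x. y \<in> comp_des I \<longleftrightarrow> y \<in> comp_des J"
  shows "(I, J) \<in> lexord {(a, b). a < b}"
  using assms
proof (induction I arbitrary: J x)
  case (Cons a A)
  then obtain b B where J: "J = b # B" by (cases J) auto
  have "A \<noteq> []" "B \<noteq> []" using Cons.prems J by (auto simp: comp_des_Cons split: if_splits)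
  consider "a < b" | "b < a" | "a = b" by linarith
  then show ?case
  proof cases
    case 1
    then show ?thesis using J by simp
  next
    case 2
    have "b \<in> comp_des J" using J \<open>B \<noteq> []\<close> by (simp add: comp_des_Cons)
    moreover have "b \<notin> comp_des (a # A)" using 2 comp_des_Cons_ge by fastforce
    moreover have "a \<le> x" using Cons.prems(4) comp_des_Cons_ge by blast
    ultimately show ?thesis using Cons.prems(6) 2 by simp
  next
    case 3
    obtain x' where "x' \<in> comp_des A" "x' \<notin> comp_des B"
      "\<forall>y<x'. y \<in> comp_des A \<longleftrightarrow> y \<in> comp_des B"
      using least_des_difference_Cons[OF \<open>A \<noteq> []\<close> \<open>B \<noteq> []\<close>] Cons.prems J 3 by auto
    then have "(A, B) \<in> lexord {(a, b). a < b}"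
      using Cons.IH[of B x'] Cons.prems(1-3) J by simp
    then show ?thesis using J 3 by simp
  qed
qed simp

lemma length_eq_Suc_card_comp_des: "1 \<le> n \<Longrightarrow> is_comp n I \<Longrightarrow> length I = Suc (card (comp_des I))"
  by (cases I) (auto simp: is_comp_def card_comp_des)

lemma
  assumes "1 \<le> n"
  shows is_comp_comp_bar_tilde: "is_comp n (comp_bar_tilde n J)"
    and comp_des_comp_bar_tilde: "comp_des (comp_bar_tilde n J) = {1..<n} - comp_des J"
  using is_comp_comp_of_des[OF assms] comp_des_comp_of_des[OF assms]
  by (simp_all add: comp_bar_tilde_def)

lemma comp_des_eq_compl_comp_bar_tilde:
  "1 \<le> n \<Longrightarrow> is_comp n J \<Longrightarrow> comp_des J = {1..<n} - comp_des (comp_bar_tilde n J)"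
  using comp_des_comp_bar_tilde comp_des_subset by blast

lemma ex_least_difference:
  fixes A B :: "nat set"
  assumes "A \<noteq> B"
  obtains x where "x \<in> (A - B) \<union> (B - A)" "\<forall>y<x. y \<in> A \<longleftrightarrow> y \<in> B"
proof -
  have "\<exists>x. x \<in> (A - B) \<union> (B - A)" using assms by blast
  then show thesis using that exists_least_iff[of "\<lambda>x. x \<in> (A - B) \<union> (B - A)"] by blast
qed

section \<open>The saillance factorization\<close>

function saillance_blocks :: "nat list \<Rightarrow> nat list list" where
  "saillance_blocks [] = []"
| "saillance_blocks (a # xs) =
     (a # takeWhile (\<lambda>x. x < a) xs) # saillance_blocks (dropWhile (\<lambda>x. x < a) xs)"
  by pat_completeness auto
termination
  by (relation "measure length") (auto simp: le_imp_less_Suc length_dropWhile_le)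

lemma concat_saillance_blocks: "concat (saillance_blocks s) = s"
  by (induction s rule: saillance_blocks.induct) auto

lemma init_dominated_saillance_blocks: "\<forall>u\<in>set (saillance_blocks s). init_dominated u"
  by (induction s rule: saillance_blocks.induct)
    (auto simp: init_dominated_def dest: set_takeWhileD)

lemma hd_dropWhile_less:
  fixes a :: "'a :: linorder"
  assumes "dropWhile (\<lambda>x. x < a) xs \<noteq> []" "a \<notin> set xs"
  shows "a < hd (dropWhile (\<lambda>x. x < a) xs)"
  using assms hd_dropWhile[OF assms(1)] hd_in_set[OF assms(1)] set_dropWhileD
  by (metis antisym_conv3)

lemma hd_le_hd_saillance_blocks: "u \<in> set (saillance_blocks s) \<Longrightarrow> hd s \<le> hd u"
proof (induction s rule: saillance_blocks.induct)
  case (2 a xs)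
  define dw where "dw = dropWhile (\<lambda>x. x < a) xs"
  show ?case
  proof (cases "u \<in> set (saillance_blocks dw)")
    case True
    then have "dw \<noteq> []" by auto
    then have "a \<le> hd dw" using hd_dropWhile[of "\<lambda>x. x < a" xs] by (simp add: dw_def)
    then show ?thesis using 2 True by (force simp: dw_def)
  qed (use 2 in \<open>simp add: dw_def\<close>)
qed simp

lemma sorted_hd_saillance_blocks: "distinct s \<Longrightarrow> sorted_wrt (<) (map hd (saillance_blocks s))"
proof (induction s rule: saillance_blocks.induct)
  case (2 a xs)
  define dw where "dw = dropWhile (\<lambda>x. x < a) xs"
  have "a < hd u" if "u \<in> set (saillance_blocks dw)" for u
  proof -
    have "dw \<noteq> []" using that by auto
    then have "a < hd dw" using 2 by (simp add: hd_dropWhile_less dw_def)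
    then show ?thesis using hd_le_hd_saillance_blocks[OF that] by simp
  qed
  moreover have "sorted_wrt (<) (map hd (saillance_blocks dw))"
    using 2 by (simp add: dw_def distinct_dropWhile)
  ultimately show ?case
    unfolding saillance_blocks.simps(2) dw_def[symmetric] by simp
qed simp

lemma saillance_blocks_unique:
  "concat us = s \<Longrightarrow> \<forall>u\<in>set us. init_dominated u \<Longrightarrow> sorted_wrt (<) (map hd us)
    \<Longrightarrow> us = saillance_blocks s"
proof (induction us arbitrary: s)
  case (Cons u us)
  obtain a t where u: "u = a # t" and t: "\<forall>x\<in>set t. x < a"
    using Cons.prems by (cases u) (auto simp: init_dominated_def)
  have "concat us = [] \<or> \<not> hd (concat us) < a"
  proof (cases us)
    case (Cons v vs)
    then have "v \<noteq> []" using Cons.prems by (auto simp: init_dominated_def)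
    then show ?thesis using Cons.prems u Cons by (cases v) auto
  qed simp
  then have "takeWhile (\<lambda>x. x < a) (t @ concat us) = t"
    and "dropWhile (\<lambda>x. x < a) (t @ concat us) = concat us"
    using t by (auto simp: takeWhile_append2 dropWhile_append2 takeWhile_eq_Nil_iff
        dropWhile_eq_self_iff)
  then show ?case using Cons u by auto
qed simp

lemma saillance_factorization_eq: "distinct s \<Longrightarrow> saillance_factorization s = saillance_blocks s"
  unfolding saillance_factorization_def
  by (rule the_equality)
    (auto simp: concat_saillance_blocks init_dominated_saillance_blocks
      sorted_hd_saillance_blocks intro: saillance_blocks_unique)

definition ltr_max_pos :: "nat list \<Rightarrow> nat set" where
  "ltr_max_pos s = {q. q < length s \<and> (\<forall>x\<in>set (take q s). x < s ! q)}"

lemma ltr_max_pos_Nil [simp]: "ltr_max_pos [] = {}"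
  by (simp add: ltr_max_pos_def)

lemma ltr_max_pos_append:
  "ltr_max_pos (xs @ ys) = ltr_max_pos xs \<union> (+) (length xs) ` {q \<in> ltr_max_pos ys. \<forall>x\<in>set xs. x < ys ! q}"
  (is "_ = _ \<union> (+) (length xs) ` ?R")
proof (rule set_eqI)
  fix q
  show "q \<in> ltr_max_pos (xs @ ys) \<longleftrightarrow> q \<in> ltr_max_pos xs \<union> (+) (length xs) ` ?R"
  proof (cases "q < length xs")
    case True
    then have "q \<notin> (+) (length xs) ` ?R" by auto
    moreover have "q \<in> ltr_max_pos (xs @ ys) \<longleftrightarrow> q \<in> ltr_max_pos xs"
      using True by (simp add: ltr_max_pos_def nth_append)
    ultimately show ?thesis by blast
  next
    case False
    then obtain q' where q: "q = length xs + q'" by (metis add_diff_inverse)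
    have "q \<notin> ltr_max_pos xs" using q by (simp add: ltr_max_pos_def)
    moreover have "q \<in> (+) (length xs) ` ?R \<longleftrightarrow> q' \<in> ?R" using q by auto
    moreover have "q \<in> ltr_max_pos (xs @ ys) \<longleftrightarrow> q' \<in> ?R"
      using q by (simp add: ltr_max_pos_def nth_append ball_Un conj_ac)
    ultimately show ?thesis by blast
  qed
qed

lemma ltr_max_pos_init_dominated:
  assumes "\<forall>x\<in>set t. x < a"
  shows "ltr_max_pos (a # t) = {0}"
proof -
  have "q = 0" if "q \<in> ltr_max_pos (a # t)" for q
  proof (rule ccontr)
    assume "q \<noteq> 0"
    then obtain p where "q = Suc p" by (cases q) auto
    with that have "p < length t" "a < t ! p" by (auto simp: ltr_max_pos_def)
    then show False using assms nth_mem[of p t] by fastforce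
  qed
  then show ?thesis by (auto simp: ltr_max_pos_def)
qed

lemma hd_less_ltr_max: "q \<in> ltr_max_pos s \<Longrightarrow> 0 < q \<Longrightarrow> s ! 0 < s ! q"
  by (cases s) (auto simp: ltr_max_pos_def gr0_conv_Suc)

lemma ltr_max_pos_Cons:
  assumes "distinct (a # xs)"
  shows "ltr_max_pos (a # xs) - {0} =
    (+) (Suc (length (takeWhile (\<lambda>x. x < a) xs))) ` ltr_max_pos (dropWhile (\<lambda>x. x < a) xs)"
proof -
  define tw dw where "tw = takeWhile (\<lambda>x. x < a) xs" and "dw = dropWhile (\<lambda>x. x < a) xs"
  have tw: "\<forall>x\<in>set tw. x < a" by (auto simp: tw_def dest: set_takeWhileD)
  have "x < dw ! q" if "q \<in> ltr_max_pos dw" "x \<in> set (a # tw)" for q x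
  proof -
    have "dw \<noteq> []" using that by (auto simp: ltr_max_pos_def)
    then have "a < hd dw" using assms by (simp add: hd_dropWhile_less dw_def)
    moreover have "hd dw \<le> dw ! q"
      using hd_less_ltr_max[OF that(1)] \<open>dw \<noteq> []\<close> by (cases "q = 0") (auto simp: hd_conv_nth)
    ultimately show ?thesis using that(2) tw by fastforce
  qed
  then have "ltr_max_pos ((a # tw) @ dw) = {0} \<union> (+) (Suc (length tw)) ` ltr_max_pos dw"
    unfolding ltr_max_pos_append ltr_max_pos_init_dominated[OF tw] by auto
  then show ?thesis by (auto simp: tw_def dw_def)
qed

lemma comp_des_saillance_blocks:
  "distinct s \<Longrightarrow> comp_des (map length (saillance_blocks s)) = ltr_max_pos s - {0}"
proof (induction s rule: saillance_blocks.induct)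
  case (2 a xs)
  define tw dw where "tw = takeWhile (\<lambda>x. x < a) xs" and "dw = dropWhile (\<lambda>x. x < a) xs"
  have IH: "comp_des (map length (saillance_blocks dw)) = ltr_max_pos dw - {0}"
    using 2 by (simp add: dw_def distinct_dropWhile)
  have L: "ltr_max_pos (a # xs) - {0} = (+) (Suc (length tw)) ` ltr_max_pos dw"
    using ltr_max_pos_Cons[OF "2.prems"] by (simp add: tw_def dw_def)
  have blocks: "map length (saillance_blocks (a # xs)) =
      Suc (length tw) # map length (saillance_blocks dw)"
    by (simp add: tw_def dw_def)
  show ?case
  proof (cases "dw = []")
    case True
    then show ?thesis using L blocks by (simp add: comp_des_Cons)
  next
    case False
    then have "ltr_max_pos dw = insert 0 (ltr_max_pos dw - {0})"
      by (auto simp: ltr_max_pos_def)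
    then have "(+) (Suc (length tw)) ` ltr_max_pos dw =
        insert (Suc (length tw)) ((+) (Suc (length tw)) ` (ltr_max_pos dw - {0}))"
      by (metis add_0_right image_insert)
    moreover have "saillance_blocks dw \<noteq> []" using False by (cases dw) auto
    ultimately show ?thesis using L IH blocks by (simp add: comp_des_Cons)
  qed
qed simp

lemma comp_des_SC: "distinct s \<Longrightarrow> comp_des (SC s) = ltr_max_pos s - {0}"
  by (simp add: SC_def saillance_factorization_eq comp_des_saillance_blocks)

lemma mem_ltr_max_pos_iff: "q \<in> ltr_max_pos s \<longleftrightarrow> q < length s \<and> (\<forall>i<q. s ! i < s ! q)"
proof (cases "q < length s")
  case True
  then have "set (take q s) = (!) s ` {0..<q}" by (simp add: nth_image)
  then show ?thesis using True by (auto simp: ltr_max_pos_def)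
qed (simp add: ltr_max_pos_def)

section \<open>Recoils\<close>

lemma recoils_iff_split:
  "i \<in> recoils s \<longleftrightarrow> (\<exists>xs ys. s = xs @ ys \<and> Suc i \<in> set xs \<and> i \<in> set ys)"
proof
  assume "i \<in> recoils s"
  then obtain j k where jk: "j < k" "k < length s" "s ! j = Suc i" "s ! k = i"
    by (auto simp: recoils_def)
  have "Suc i \<in> set (take (Suc j) s)"
    using jk by (auto simp: in_set_conv_nth intro!: exI[of _ j])
  moreover have "i \<in> set (drop (Suc j) s)"
    using jk by (auto simp: in_set_conv_nth intro!: exI[of _ "k - Suc j"])
  ultimately show "\<exists>xs ys. s = xs @ ys \<and> Suc i \<in> set xs \<and> i \<in> set ys"
    by (metis append_take_drop_id)
next
  assume "\<exists>xs ys. s = xs @ ys \<and> Suc i \<in> set xs \<and> i \<in> set ys"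
  then obtain xs ys j k where "s = xs @ ys" "j < length xs" "xs ! j = Suc i"
    "k < length ys" "ys ! k = i"
    by (auto simp: in_set_conv_nth)
  then show "i \<in> recoils s"
    unfolding recoils_def by (intro CollectI exI[of _ j] exI[of _ "length xs + k"]) (auto simp: nth_append)
qed

lemma recoils_append:
  "recoils (xs @ ys) = recoils xs \<union> recoils ys \<union> {i. Suc i \<in> set xs \<and> i \<in> set ys}"
proof (rule set_eqI, rule iffI)
  fix i
  assume "i \<in> recoils (xs @ ys)"
  then obtain as bs where ab: "xs @ ys = as @ bs" "Suc i \<in> set as" "i \<in> set bs"
    by (auto simp: recoils_iff_split)
  then obtain us where "xs = as @ us \<and> us @ ys = bs \<or> xs @ us = as \<and> ys = us @ bs"
    by (auto simp: append_eq_append_conv2)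
  then consider "xs = as @ us" "bs = us @ ys" | "as = xs @ us" "ys = us @ bs"
    by blast
  then show "i \<in> recoils xs \<union> recoils ys \<union> {i. Suc i \<in> set xs \<and> i \<in> set ys}"
  proof cases
    case 1
    then have "i \<in> recoils xs \<or> i \<in> set ys"
      using ab recoils_iff_split[of i xs] by auto
    then show ?thesis using 1 ab by auto
  next
    case 2
    then have "i \<in> recoils ys \<or> Suc i \<in> set xs"
      using ab recoils_iff_split[of i ys] by auto
    then show ?thesis using 2 ab by auto
  qed
next
  fix i
  assume "i \<in> recoils xs \<union> recoils ys \<union> {i. Suc i \<in> set xs \<and> i \<in> set ys}"
  then consider "i \<in> recoils xs" | "i \<in> recoils ys" | "Suc i \<in> set xs" "i \<in> set ys"
    by blast
  then show "i \<in> recoils (xs @ ys)"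
  proof cases
    case 1
    then obtain as bs where "xs = as @ bs" "Suc i \<in> set as" "i \<in> set bs"
      by (auto simp: recoils_iff_split)
    then show ?thesis unfolding recoils_iff_split by (intro exI[of _ as] exI[of _ "bs @ ys"]) simp
  next
    case 2
    then obtain as bs where "ys = as @ bs" "Suc i \<in> set as" "i \<in> set bs"
      by (auto simp: recoils_iff_split)
    then show ?thesis unfolding recoils_iff_split by (intro exI[of _ "xs @ as"] exI[of _ bs]) simp
  next
    case 3
    then show ?thesis unfolding recoils_iff_split by blast
  qed
qed

lemma recoils_imp_mem: "i \<in> recoils xs \<Longrightarrow> i \<in> set xs \<and> Suc i \<in> set xs"
  by (auto simp: recoils_iff_split)

lemma recoils_Cons: "recoils (x # xs) = recoils xs \<union> {i. Suc i = x \<and> i \<in> set xs}"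
proof -
  have "recoils [x] = {}" by (auto simp: recoils_def)
  then show ?thesis using recoils_append[of "[x]" xs] by simp
qed

lemma recoils_append_left: "i \<in> recoils (ys @ zs) \<Longrightarrow> i \<notin> set zs \<Longrightarrow> i \<in> recoils ys"
  using recoils_imp_mem[of i zs] by (auto simp: recoils_append)

lemma recoils_append_right: "i \<in> recoils (ys @ zs) \<Longrightarrow> Suc i \<notin> set ys \<Longrightarrow> i \<in> recoils zs"
  using recoils_imp_mem[of i ys] by (auto simp: recoils_append)

lemma recoils_rev_upt: "recoils (rev [Suc a..<Suc b]) = {a<..<b}"
proof (induction b)
  case 0
  then show ?case by (simp add: recoils_def)
next
  case (Suc b)
  show ?case
  proof (cases "a \<le> b")
    case True
    then have "rev [Suc a..<Suc (Suc b)] = Suc b # rev [Suc a..<Suc b]" by simp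
    then have "recoils (rev [Suc a..<Suc (Suc b)]) =
        {a<..<b} \<union> {i. Suc i = Suc b \<and> i \<in> set (rev [Suc a..<Suc b])}"
      by (simp only: recoils_Cons Suc.IH)
    also have "\<dots> = {a<..<Suc b}" using True by auto
    finally show ?thesis .
  next
    case False
    then show ?thesis by (auto simp: recoils_def)
  qed
qed

lemma eq_rev_upt_if_recoils:
  "distinct xs \<Longrightarrow> set xs = {a<..b} \<Longrightarrow> {a<..<b} \<subseteq> recoils xs \<Longrightarrow> xs = rev [Suc a..<Suc b]"
proof (induction xs arbitrary: b)
  case Nil
  then show ?case by (auto simp: set_eq_iff dest: spec[of _ b])
next
  case (Cons y ys)
  have "a < y" "y \<le> b" using Cons.prems(2) by auto
  have "y = b"
  proof (rule ccontr)
    assume "y \<noteq> b"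
    then have "y \<in> recoils (y # ys)" using Cons.prems(3) \<open>a < y\<close> \<open>y \<le> b\<close> by auto
    then show False using Cons.prems(1) recoils_imp_mem[of y ys] by (auto simp: recoils_Cons)
  qed
  then obtain b' where b': "b = Suc b'" using \<open>a < y\<close> by (cases b) auto
  have "set ys = {a<..b} - {b}" using Cons.prems(1,2) \<open>y = b\<close> by auto
  also have "\<dots> = {a<..b'}" using b' by auto
  finally have "set ys = {a<..b'}" .
  moreover have "{a<..<b'} \<subseteq> recoils ys"
  proof
    fix i assume "i \<in> {a<..<b'}"
    then have "i \<in> recoils (y # ys)" "Suc i \<noteq> y" using Cons.prems(3) \<open>y = b\<close> b' by auto
    then show "i \<in> recoils ys" by (simp add: recoils_Cons)
  qed
  ultimately have "ys = rev [Suc a..<Suc b']" using Cons by simp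
  then show ?case using \<open>y = b\<close> b' \<open>a < y\<close> by simp
qed

section \<open>Runs of consecutive values\<close>

fun dec_runs :: "nat list \<Rightarrow> nat \<Rightarrow> nat list list" where
  "dec_runs [] m = []"
| "dec_runs (k # K) m = rev [Suc m..<Suc (m + k)] # dec_runs K (m + k)"

lemma length_dec_runs [simp]: "map length (dec_runs K m) = K"
  by (induction K arbitrary: m) auto

lemma set_concat_dec_runs: "set (concat (dec_runs K m)) = {m<..m + sum_list K}"
  by (induction K arbitrary: m) auto

lemma distinct_concat_dec_runs: "distinct (concat (dec_runs K m))"
proof (induction K arbitrary: m)
  case (Cons k K)
  have "set (concat (dec_runs K (m + k))) = {m + k<..m + k + sum_list K}"
    by (rule set_concat_dec_runs)
  then show ?case using Cons by auto
qed simp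

lemma hd_dec_runs: "\<forall>x\<in>set K. 0 < x \<Longrightarrow> u \<in> set (dec_runs K m) \<Longrightarrow> m < hd u"
  by (induction K arbitrary: m) fastforce+

lemma init_dominated_dec_runs: "\<forall>x\<in>set K. 0 < x \<Longrightarrow> \<forall>u\<in>set (dec_runs K m). init_dominated u"
  by (induction K arbitrary: m) (auto simp: init_dominated_def)

lemma sorted_hd_dec_runs: "\<forall>x\<in>set K. 0 < x \<Longrightarrow> sorted_wrt (<) (map hd (dec_runs K m))"
proof (induction K arbitrary: m)
  case (Cons k K)
  then show ?case using hd_dec_runs[where m="m + k"] by auto
qed simp

lemma SC_concat_dec_runs: "\<forall>x\<in>set K. 0 < x \<Longrightarrow> SC (concat (dec_runs K m)) = K"
  using saillance_blocks_unique[OF refl init_dominated_dec_runs sorted_hd_dec_runs]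
  by (simp add: SC_def saillance_factorization_eq distinct_concat_dec_runs)

lemma recoils_concat_dec_runs:
  "\<forall>x\<in>set K. 0 < x \<Longrightarrow>
    recoils (concat (dec_runs K m)) = {m<..<m + sum_list K} - (+) m ` comp_des K"
proof (induction K arbitrary: m)
  case Nil
  then show ?case by (simp add: recoils_def)
next
  case (Cons k K)
  let ?run = "rev [Suc m..<Suc (m + k)]" and ?rest = "concat (dec_runs K (m + k))"
  have "{i. Suc i \<in> set ?run \<and> i \<in> set ?rest} = {}"
    unfolding set_concat_dec_runs by auto
  then have "recoils (concat (dec_runs (k # K) m)) = recoils ?run \<union> recoils ?rest"
    by (simp only: dec_runs.simps concat.simps recoils_append) simp
  also have "\<dots> = {m<..<m + k} \<union> ({m + k<..<m + k + sum_list K} - (+) (m + k) ` comp_des K)"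
    using Cons by (simp only: recoils_rev_upt) simp
  also have "\<dots> = {m<..<m + sum_list (k # K)} - (+) m ` comp_des (k # K)"
    using Cons.prems comp_des_pos[of K] by (auto simp: comp_des_Cons image_image add.assoc)
  finally show ?case .
qed

lemma set_take_drop_interval:
  assumes "distinct xs" "set (take k xs) = {m<..m + k}" "set (take (k + p) xs) = {m<..m + k + p}"
  shows "set (take p (drop k xs)) = {m + k<..m + k + p}"
proof -
  let ?A = "set (take k xs)" and ?T = "set (take p (drop k xs))"
  have "?A \<union> ?T = {m<..m + k + p}" using assms(3) by (simp add: take_add)
  moreover have "?A \<inter> ?T = {}"
    using assms(1) by (metis append_take_drop_id distinct_append in_set_takeD disjoint_iff)
  ultimately have "?T = {m<..m + k + p} - ?A" by blast
  then show ?thesis using assms(2) by auto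
qed

lemma take_eq_rev_upt_if_recoils:
  assumes "distinct xs" "set (take k xs) = {m<..m + k}" "{m<..<m + k} \<subseteq> recoils xs"
  shows "take k xs = rev [Suc m..<Suc (m + k)]"
proof (rule eq_rev_upt_if_recoils)
  show "{m<..<m + k} \<subseteq> recoils (take k xs)"
  proof
    fix i assume i: "i \<in> {m<..<m + k}"
    then have "i \<in> set (take k xs)" using assms(2) by auto
    then have "i \<notin> set (drop k xs)"
      using assms(1) by (metis append_take_drop_id distinct_append disjoint_iff)
    then show "i \<in> recoils (take k xs)"
      using recoils_append_left[of i "take k xs" "drop k xs"] assms(3) i by auto
  qed
qed (use assms in simp_all)

lemma eq_concat_dec_runs:
  assumes "\<forall>x\<in>set K. 0 < x" "distinct xs" "set xs = {m<..m + sum_list K}"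
    and "\<forall>p\<in>comp_des K. set (take p xs) = {m<..m + p}"
    and "{m<..<m + sum_list K} - (+) m ` comp_des K \<subseteq> recoils xs"
  shows "xs = concat (dec_runs K m)"
  using assms
proof (induction K arbitrary: m xs)
  case Nil
  then show ?case by simp
next
  case (Cons k K)
  have len: "length xs = k + sum_list K"
    using Cons.prems(2,3) distinct_card[of xs] by simp
  then have whole: "set (take (k + sum_list K) xs) = {m<..m + k + sum_list K}"
    using Cons.prems(3) by (simp add: add.assoc)
  have set_take: "set (take k xs) = {m<..m + k}"
    using Cons.prems(3,4) len by (cases "K = []") (simp_all add: comp_des_Cons)
  have "{m<..<m + k} \<subseteq> recoils xs"
    using Cons.prems(5) comp_des_Cons_ge[of _ k K] by fastforce
  then have "take k xs = rev [Suc m..<Suc (m + k)]"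
    using take_eq_rev_upt_if_recoils[OF Cons.prems(2) set_take] by simp
  moreover have "drop k xs = concat (dec_runs K (m + k))"
  proof (rule Cons.IH)
    show "set (drop k xs) = {m + k<..m + k + sum_list K}"
      using set_take_drop_interval[OF Cons.prems(2) set_take whole] len by simp
    show "\<forall>p\<in>comp_des K. set (take p (drop k xs)) = {m + k<..m + k + p}"
    proof
      fix p assume "p \<in> comp_des K"
      then have "set (take (k + p) xs) = {m<..m + k + p}"
        using Cons.prems(4) by (auto simp: comp_des_Cons add.assoc split: if_splits)
      then show "set (take p (drop k xs)) = {m + k<..m + k + p}"
        using set_take_drop_interval[OF Cons.prems(2) set_take] by simp
    qed
    show "{m + k<..<m + k + sum_list K} - (+) (m + k) ` comp_des K \<subseteq> recoils (drop k xs)"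
    proof
      fix i assume i: "i \<in> {m + k<..<m + k + sum_list K} - (+) (m + k) ` comp_des K"
      then have "i \<in> recoils (take k xs @ drop k xs)"
        using Cons.prems(5) by (auto simp: comp_des_Cons image_image add.assoc split: if_splits)
      moreover have "Suc i \<notin> set (take k xs)" using i set_take by auto
      ultimately show "i \<in> recoils (drop k xs)" using recoils_append_right by blast
    qed
  qed (use Cons.prems in auto)
  ultimately show ?case by (metis append_take_drop_id concat.simps(2) dec_runs.simps(2))
qed

section \<open>Left-to-right maxima of a permutation\<close>

locale perm_word =
  fixes s :: "nat list" and n :: nat
  assumes perm: "s \<in> perms n" and pos: "1 \<le> n"
begin

definition max_pos :: "nat set" where
  "max_pos = ltr_max_pos s - {0}"

definition max_vals :: "nat set" where
  "max_vals = (!) s ` ltr_max_pos s - {n}"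

(* Only meaningful for m < n: then the entry n lies above m, so the LEAST exists. *)
definition first_above :: "nat \<Rightarrow> nat" where
  "first_above m = (LEAST i. m < s ! i)"

lemma distinct: "distinct s" and set_eq: "set s = {1..n}"
  using perm by (simp_all add: perms_def)

lemma length_eq: "length s = n"
  using distinct_card[OF distinct] set_eq by simp

lemma nth_mem_interval: "i < n \<Longrightarrow> s ! i \<in> {1..n}"
  using set_eq length_eq nth_mem by blast

lemma nth_eq_iff: "i < n \<Longrightarrow> j < n \<Longrightarrow> s ! i = s ! j \<longleftrightarrow> i = j"
  using nth_eq_iff_index_eq[OF distinct] length_eq by simp

lemma pos_of_maxE:
  obtains p where "p < n" "s ! p = n" "p \<in> ltr_max_pos s"
proof -
  obtain p where p: "p < n" "s ! p = n"
    using set_eq pos length_eq by (metis atLeastAtMost_iff in_set_conv_nth order_refl)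
  have "s ! i < s ! p" if "i < p" for i
    using nth_mem_interval[of i] nth_eq_iff[of i p] p that by fastforce
  then show thesis using that p by (simp add: mem_ltr_max_pos_iff length_eq)
qed

lemma max_pos_subset: "max_pos \<subseteq> {1..<n}"
  using length_eq by (auto simp: max_pos_def ltr_max_pos_def)

lemma max_vals_subset: "max_vals \<subseteq> {1..<n}"
proof
  fix m assume "m \<in> max_vals"
  then obtain q where "q < n" "m = s ! q" "m \<noteq> n"
    using length_eq by (auto simp: max_vals_def ltr_max_pos_def)
  then show "m \<in> {1..<n}" using nth_mem_interval[of q] by auto
qed

lemma card_max_vals: "card max_vals = card max_pos"
proof -
  obtain p where "s ! p = n" "p \<in> ltr_max_pos s" using pos_of_maxE .
  then have "n \<in> (!) s ` ltr_max_pos s" by force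
  moreover have "0 \<in> ltr_max_pos s" using pos length_eq by (simp add: ltr_max_pos_def)
  moreover have "finite (ltr_max_pos s)" by (simp add: ltr_max_pos_def)
  moreover have "inj_on ((!) s) (ltr_max_pos s)"
    using nth_eq_iff length_eq by (auto simp: inj_on_def ltr_max_pos_def)
  ultimately show ?thesis
    by (simp add: max_vals_def max_pos_def card_Diff_singleton card_image)
qed

lemma recoils_subset: "recoils s \<subseteq> {1..<n} - max_vals"
proof
  fix i assume "i \<in> recoils s"
  then obtain j k where jk: "j < k" "k < n" "s ! j = Suc i" "s ! k = i"
    using length_eq by (auto simp: recoils_def)
  then have "i \<in> {1..<n}" using nth_mem_interval[of j] nth_mem_interval[of k] by auto
  moreover have "i \<notin> max_vals"
  proof
    assume "i \<in> max_vals"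
    then obtain q where "q \<in> ltr_max_pos s" "s ! q = i" by (auto simp: max_vals_def)
    then have "q = k" "\<forall>i<q. s ! i < s ! q"
      using jk nth_eq_iff[of q k] length_eq by (auto simp: mem_ltr_max_pos_iff)
    then show False using jk by fastforce
  qed
  ultimately show "i \<in> {1..<n} - max_vals" by blast
qed

lemma first_above_spec:
  assumes "m \<in> max_vals"
  shows "first_above m < n" "m < s ! first_above m" "\<forall>i<first_above m. s ! i \<le> m"
proof -
  obtain p where p: "p < n" "s ! p = n" using pos_of_maxE by blast
  have "m < s ! p" using assms max_vals_subset p by auto
  then show "m < s ! first_above m" "first_above m < n"
    unfolding first_above_def using p by (auto intro: LeastI Least_le le_less_trans)
  show "\<forall>i<first_above m. s ! i \<le> m"
    unfolding first_above_def using not_less_Least not_less by blast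
qed

lemma first_above_mem_max_pos:
  assumes "m \<in> max_vals"
  shows "first_above m \<in> max_pos"
proof -
  have "first_above m \<in> ltr_max_pos s"
    using first_above_spec[OF assms] length_eq by (fastforce simp: mem_ltr_max_pos_iff)
  moreover have "first_above m \<noteq> 0"
  proof -
    obtain q where "q \<in> ltr_max_pos s" "s ! q = m" using assms by (auto simp: max_vals_def)
    then have "s ! 0 \<le> m" by (cases q) (auto simp: mem_ltr_max_pos_iff)
    then show ?thesis using first_above_spec(2)[OF assms] by (metis not_less)
  qed
  ultimately show ?thesis by (simp add: max_pos_def)
qed

lemma first_above_le:
  assumes "m \<in> max_vals"
  shows "first_above m \<le> m"
proof -
  let ?g = "first_above m"
  have "set (take ?g s) \<subseteq> {1..m}"
  proof
    fix x assume "x \<in> set (take ?g s)"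
    then obtain i where "i < ?g" "x = s ! i"
      using first_above_spec(1)[OF assms] length_eq by (auto simp: in_set_conv_nth)
    then show "x \<in> {1..m}"
      using first_above_spec(1,3)[OF assms] nth_mem_interval[of i] by auto
  qed
  then have "card (set (take ?g s)) \<le> m" using card_mono[of "{1..m}"] by fastforce
  moreover have "card (set (take ?g s)) = ?g"
    using distinct_card[of "take ?g s"] distinct first_above_spec(1)[OF assms] length_eq by simp
  ultimately show ?thesis by simp
qed

lemma strict_mono_on_first_above: "strict_mono_on max_vals first_above"
proof (rule strict_mono_onI)
  fix m1 m2 assume m: "m1 \<in> max_vals" "m2 \<in> max_vals" "m1 < m2"
  obtain q where q: "q \<in> ltr_max_pos s" "s ! q = m2" using m(2) by (auto simp: max_vals_def)
  have "first_above m1 \<le> q" unfolding first_above_def using q m(3) by (auto intro: Least_le)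
  moreover have "q < first_above m2"
  proof (rule ccontr)
    assume "\<not> q < first_above m2"
    then have "s ! first_above m2 \<le> s ! q"
      using q(1) by (cases "first_above m2 < q") (auto simp: mem_ltr_max_pos_iff less_imp_le)
    then show False using first_above_spec(2)[OF m(2)] q(2) by simp
  qed
  ultimately show "first_above m1 < first_above m2" by simp
qed

lemma least_difference_in_max_pos:
  assumes "x \<in> max_vals" and agree: "\<forall>y<x. y \<in> max_vals \<longleftrightarrow> y \<in> max_pos"
  shows "x \<in> max_pos"
proof (rule ccontr)
  assume "x \<notin> max_pos"
  define A where "A = {m \<in> max_vals. m \<le> x}"
  define B where "B = {q \<in> max_pos. q \<le> x}"
  have "finite B" using max_pos_subset finite_subset by (auto simp: B_def)
  have "first_above ` A \<subseteq> B"
    using first_above_mem_max_pos first_above_le by (fastforce simp: A_def B_def)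
  moreover have "inj_on first_above A"
    using strict_mono_on_imp_inj_on[OF strict_mono_on_first_above] by (rule inj_on_subset) (auto simp: A_def)
  ultimately have "card A \<le> card B" using \<open>finite B\<close> by (metis card_inj_on_le)
  moreover have "A = insert x B"
    using assms \<open>x \<notin> max_pos\<close> by (auto simp: A_def B_def nat_less_le)
  moreover have "x \<notin> B" using \<open>x \<notin> max_pos\<close> by (simp add: B_def)
  ultimately show False using \<open>finite B\<close> by simp
qed

lemma first_above_eq_self:
  assumes "max_vals = max_pos"
  shows "m \<in> max_pos \<Longrightarrow> first_above m = m"
proof (induction m rule: less_induct)
  case (less m)
  then have m: "m \<in> max_vals" using assms by simp
  show ?case
  proof (rule ccontr)
    assume "first_above m \<noteq> m"
    then have "first_above m < m" using first_above_le[OF m] by simp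
    moreover have "first_above m \<in> max_vals" using first_above_mem_max_pos[OF m] assms by simp
    ultimately have "first_above (first_above m) = first_above m" using less.IH assms by simp
    then show False
      using strict_mono_on_imp_inj_on[OF strict_mono_on_first_above] m \<open>first_above m \<in> max_vals\<close>
        \<open>first_above m \<noteq> m\<close> by (meson inj_onD)
  qed
qed

lemma set_take_max_pos:
  assumes "max_vals = max_pos" "m \<in> max_pos"
  shows "set (take m s) = {0<..m}"
proof -
  have m: "m \<in> max_vals" "m < n" using assms max_pos_subset by auto
  have "set (take m s) \<subseteq> {0<..m}"
  proof
    fix x assume "x \<in> set (take m s)"
    then obtain i where "i < m" "x = s ! i" using m length_eq by (auto simp: in_set_conv_nth)
    then show "x \<in> {0<..m}"
      using first_above_spec(3)[OF m(1)] first_above_eq_self[OF assms] nth_mem_interval[of i] m by auto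
  qed
  moreover have "card (set (take m s)) = card {0<..m}"
    using distinct_card[of "take m s"] distinct m length_eq by simp
  ultimately show ?thesis by (simp add: card_subset_eq)
qed

lemma comp_des_SC_eq: "comp_des (SC s) = max_pos"
  by (simp add: comp_des_SC distinct max_pos_def)

lemma
  shows is_comp_RC: "is_comp n (RC n s)"
    and comp_des_RC: "comp_des (RC n s) = recoils s"
proof -
  have "recoils s \<subseteq> {1..<n}" using recoils_subset by blast
  then show "is_comp n (RC n s)" "comp_des (RC n s) = recoils s"
    using is_comp_comp_of_des[OF pos] comp_des_comp_of_des[OF pos] by (simp_all add: RC_def)
qed

lemma card_compl_max_vals: "card ({1..<n} - max_vals) = card ({1..<n} - max_pos)"
  using max_vals_subset max_pos_subset card_max_vals
  by (simp add: card_Diff_subset finite_subset)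

lemma card_recoils_le: "card (recoils s) \<le> card ({1..<n} - max_pos)"
  using card_mono[OF _ recoils_subset] card_compl_max_vals by simp

lemma recoils_eq_if_card_ge:
  "card ({1..<n} - max_pos) \<le> card (recoils s) \<Longrightarrow> recoils s = {1..<n} - max_vals"
  using card_subset_eq[OF _ recoils_subset] card_recoils_le card_compl_max_vals by simp

lemma length_RC: "length (RC n s) = Suc (card (recoils s))"
  using length_eq_Suc_card_comp_des[OF pos is_comp_RC] comp_des_RC by simp

lemma lexord_RC_if_max_vals_ne:
  assumes "is_comp n J" "comp_des J = {1..<n} - max_pos"
    and "recoils s = {1..<n} - max_vals" "max_vals \<noteq> max_pos"
  shows "(RC n s, J) \<in> lexord {(a, b). a < b}"
proof -
  obtain x where "x \<in> (max_vals - max_pos) \<union> (max_pos - max_vals)"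
    and agree: "\<forall>y<x. y \<in> max_vals \<longleftrightarrow> y \<in> max_pos"
    using ex_least_difference[OF assms(4)] by blast
  then have x: "x \<in> max_pos" "x \<notin> max_vals" using least_difference_in_max_pos by blast+
  show ?thesis
  proof (rule lexord_if_least_des_difference)
    show "length (RC n s) = length J"
      using length_RC length_eq_Suc_card_comp_des[OF pos assms(1)] assms(2,3) card_compl_max_vals by simp
    show "\<forall>x\<in>set (RC n s). 0 < x" "\<forall>x\<in>set J. 0 < x"
      using is_comp_RC assms(1) by (simp_all add: is_comp_def)
    show "x \<in> comp_des (RC n s)" "x \<notin> comp_des J"
      using comp_des_RC assms(2,3) max_pos_subset x by auto
    show "\<forall>y<x. y \<in> comp_des (RC n s) \<longleftrightarrow> y \<in> comp_des J"
      using comp_des_RC assms(2,3) agree by auto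
  qed
qed

end

lemma RC_eq_or_comp_less:
  assumes "1 \<le> n" "is_comp n J" "s \<in> perms n" "SC s = comp_bar_tilde n J"
  shows "RC n s = J \<or> comp_less (RC n s) J"
proof -
  interpret perm_word s n using assms by unfold_locales
  have des_J: "comp_des J = {1..<n} - max_pos"
    using comp_des_eq_compl_comp_bar_tilde[OF assms(1,2)] assms(4) comp_des_SC_eq by simp
  have len_J: "length J = Suc (card ({1..<n} - max_pos))"
    using length_eq_Suc_card_comp_des[OF assms(1,2)] des_J by simp
  consider "card (recoils s) < card ({1..<n} - max_pos)" | "recoils s = {1..<n} - max_vals"
    using recoils_eq_if_card_ge by fastforce
  then show ?thesis
  proof cases
    case 1
    then show ?thesis using length_RC len_J by (simp add: comp_less_def)
  next
    case 2
    then have "length (RC n s) = length J"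
      using length_RC len_J card_compl_max_vals by simp
    show ?thesis
    proof (cases "max_vals = max_pos")
      case True
      then show ?thesis using comp_des_inject[OF is_comp_RC assms(2)] comp_des_RC 2 des_J by simp
    next
      case False
      then show ?thesis
        using lexord_RC_if_max_vals_ne[OF assms(2) des_J 2] \<open>length (RC n s) = length J\<close>
        by (simp add: comp_less_def)
    qed
  qed
qed

lemma eq_concat_dec_runs_if_RC_eq:
  assumes "1 \<le> n" "is_comp n J" "s \<in> perms n" "SC s = comp_bar_tilde n J" "RC n s = J"
  shows "s = concat (dec_runs (comp_bar_tilde n J) 0)"
proof -
  interpret perm_word s n using assms by unfold_locales
  let ?K = "comp_bar_tilde n J"
  have K: "\<forall>x\<in>set ?K. 0 < x" "sum_list ?K = n" "comp_des ?K = max_pos"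
    using is_comp_comp_bar_tilde[OF assms(1)] assms(4) comp_des_SC_eq by (auto simp: is_comp_def)
  have rec: "recoils s = {1..<n} - max_pos"
    using comp_des_RC assms(4,5) comp_des_eq_compl_comp_bar_tilde[OF assms(1,2)] comp_des_SC_eq by simp
  then have "{1..<n} - max_vals = {1..<n} - max_pos"
    using recoils_eq_if_card_ge by simp
  then have "max_vals = max_pos" using max_vals_subset max_pos_subset by blast
  show ?thesis
  proof (rule eq_concat_dec_runs)
    show "set s = {0<..0 + sum_list ?K}" using set_eq K by auto
    show "\<forall>p\<in>comp_des ?K. set (take p s) = {0<..0 + p}"
      using set_take_max_pos[OF \<open>max_vals = max_pos\<close>] K by simp
    show "{0<..<0 + sum_list ?K} - (+) 0 ` comp_des ?K \<subseteq> recoils s"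
      using rec K by auto
  qed (use K distinct in auto)
qed

lemma concat_dec_runs_witness:
  assumes "1 \<le> n" "is_comp n J"
  shows "concat (dec_runs (comp_bar_tilde n J) 0) \<in> perms n"
    and "SC (concat (dec_runs (comp_bar_tilde n J) 0)) = comp_bar_tilde n J"
    and "RC n (concat (dec_runs (comp_bar_tilde n J) 0)) = J"
proof -
  let ?K = "comp_bar_tilde n J"
  have K: "\<forall>x\<in>set ?K. 0 < x" "sum_list ?K = n"
    using is_comp_comp_bar_tilde[OF assms(1)] by (auto simp: is_comp_def)
  show "concat (dec_runs ?K 0) \<in> perms n"
    using K set_concat_dec_runs distinct_concat_dec_runs by (auto simp: perms_def)
  show "SC (concat (dec_runs ?K 0)) = ?K" using SC_concat_dec_runs[OF K(1)] .
  have "recoils (concat (dec_runs ?K 0)) = {0<..<n} - comp_des ?K"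
    using recoils_concat_dec_runs[OF K(1)] K by simp
  also have "\<dots> = comp_des J"
    using comp_des_comp_bar_tilde[OF assms(1)] comp_des_subset[OF assms(2)] by auto
  finally show "RC n (concat (dec_runs ?K 0)) = J"
    using comp_of_des_comp_des[OF assms] by (simp add: RC_def)
qed

theorem mainTheorem3:
  fixes n :: nat and J :: "nat list"
  assumes "1 \<le> n" and "is_comp n J"
  shows "U_coeff n J J = 1 \<and>
    (\<forall>I. is_comp n I \<and> I \<noteq> J \<and> \<not> comp_less I J \<longrightarrow> U_coeff n J I = 0)"
proof
  have "{s \<in> perms n. SC s = comp_bar_tilde n J \<and> RC n s = J} =
      {concat (dec_runs (comp_bar_tilde n J) 0)}"
    using eq_concat_dec_runs_if_RC_eq[OF assms] concat_dec_runs_witness[OF assms] by blast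
  then show "U_coeff n J J = 1" by (simp add: U_coeff_def)
next
  show "\<forall>I. is_comp n I \<and> I \<noteq> J \<and> \<not> comp_less I J \<longrightarrow> U_coeff n J I = 0"
  proof (intro allI impI)
    fix I assume "is_comp n I \<and> I \<noteq> J \<and> \<not> comp_less I J"
    then have "{s \<in> perms n. SC s = comp_bar_tilde n J \<and> RC n s = I} = {}"
      using RC_eq_or_comp_less[OF assms] by blast
    then show "U_coeff n J I = 0" by (simp only: U_coeff_def card.empty of_nat_0)
  qed
qed

end
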